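(* Let $d\ge2$, $1\le p\le\infty$, let $B$ be a magnetic field with bounded derivatives of all orders and $A$ its transversal gauge potential. Let $v\in C^\infty_{\mathrm{pol}}(\mathbb{R}^d,\mathbb{R})$ and $A'(y):=A(y)+\nabla v(y)$ (so $dA'=dA$). Then $M^p_{A'}(\mathbb{R}^d)\simeq M^p_A(\mathbb{R}^d)$ isometrically.
   Context: $C^\infty_{\mathrm{pol}}(\mathbb{R}^d,\mathbb{R})$ denotes real smooth functions all of whose derivatives grow at most polynomially. $B=(B_{jk})$ smooth real skew-symmetric closed 2-form with $\sup|\partial^\alpha B_{jk}|\le C_\alpha$; $A_j(y)=-\sum_k\int_0^1sy_kB_{jk}(sy)\,ds$. For a vector potential $\mathcal{A}\in\{A,A'\}$: $\varphi^{\mathcal{A}}(y,x):=\int_{\Gamma_{x,y}}\mathcal{A}=(y-x)\cdot\int_0^1\mathcal{A}((1-s)x+sy)\,ds$; $g(y)=(2\pi)^{-d/2}\pi^{-d/4}e^{-|y|^2/2}$; $\mathcal{T}^{\mathcal{A}}u(x,\xi):=\int e^{-i\xi\cdot(y-x)}g(y-x)e^{-i\varphi^{\mathcal{A}}(y,x)}u(y)\,dy$; $M^p_{\mathcal{A}}(\mathbb{R}^d):=\{u\in\mathcal{S}':\|\mathcal{T}^{\mathcal{A}}u\|_{L^p(\mathbb{R}^{2d})}<\infty\}$ with norm $\|\mathcal{T}^{\mathcal{A}}u\|_{L^p}$ (for $p=\infty$ the closure of $\mathcal{S}$ in that norm). *)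

theory Defs
  imports "HOL-Analysis.Analysis" "HOL-Probability.Essential_Supremum"
begin

definition dpart :: "'n::finite \<Rightarrow> (real^'n \<Rightarrow> 'b::real_normed_vector) \<Rightarrow> real^'n \<Rightarrow> 'b" where
  "dpart i f x = frechet_derivative f (at x) (axis i 1)"

text \<open>Iterated partial derivative; a list of coordinate indices encodes a multi-index.\<close>
definition diffs :: "'n::finite list \<Rightarrow> (real^'n \<Rightarrow> 'b::real_normed_vector) \<Rightarrow> real^'n \<Rightarrow> 'b" where
  "diffs is f = foldr dpart is f"

definition smooth :: "(real^'n::finite \<Rightarrow> 'b::real_normed_vector) \<Rightarrow> bool" where
  "smooth f \<longleftrightarrow> (\<forall>is x. diffs is f differentiable (at x))"

definition smooth_bdd :: "(real^'n::finite \<Rightarrow> 'b::real_normed_vector) \<Rightarrow> bool" where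
  "smooth_bdd f \<longleftrightarrow> smooth f \<and> (\<forall>is. \<exists>C. \<forall>x. norm (diffs is f x) \<le> C)"

definition Cinf_pol :: "(real^'n::finite \<Rightarrow> real) \<Rightarrow> bool" where
  "Cinf_pol f \<longleftrightarrow> smooth f \<and> (\<forall>is. \<exists>C N. \<forall>x. \<bar>diffs is f x\<bar> \<le> C * (1 + norm x) ^ N)"

definition grad :: "(real^'n::finite \<Rightarrow> real) \<Rightarrow> real^'n \<Rightarrow> real^'n" where
  "grad v y = (\<chi> j. dpart j v y)"

definition Schwartz :: "(real^'n::finite \<Rightarrow> complex) set" where
  "Schwartz = {f. smooth f \<and> (\<forall>is k. \<exists>C. \<forall>x. (1 + norm x) ^ k * norm (diffs is f x) \<le> C)}"

text \<open>Tempered distributions: complex-linear functionals on the Schwartz space that are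
  continuous for the Schwartz topology (bounded by finitely many seminorms); they are
  normalised to vanish outside the Schwartz space so that each distribution has a unique
  representative.\<close>
definition tempered :: "((real^'n::finite \<Rightarrow> complex) \<Rightarrow> complex) \<Rightarrow> bool" where
  "tempered u \<longleftrightarrow>
     (\<forall>\<phi>. \<phi> \<notin> Schwartz \<longrightarrow> u \<phi> = 0) \<and>
     (\<forall>\<phi>\<in>Schwartz. \<forall>\<psi>\<in>Schwartz. \<forall>a b. u (\<lambda>y. a * \<phi> y + b * \<psi> y) = a * u \<phi> + b * u \<psi>) \<and>
     (\<exists>C N. \<forall>\<phi>\<in>Schwartz. \<forall>M.
        (\<forall>x k is. k \<le> N \<and> length is \<le> N \<longrightarrow> (1 + norm x) ^ k * norm (diffs is \<phi> x) \<le> M)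
        \<longrightarrow> norm (u \<phi>) \<le> C * M)"

definition emb :: "(real^'n::finite \<Rightarrow> complex) \<Rightarrow> ((real^'n \<Rightarrow> complex) \<Rightarrow> complex)" where
  "emb f = (\<lambda>\<phi>. if \<phi> \<in> Schwartz then integral\<^sup>L lborel (\<lambda>y. f y * \<phi> y) else 0)"

definition magnetic_field :: "('n::finite \<Rightarrow> 'n \<Rightarrow> real^'n \<Rightarrow> real) \<Rightarrow> bool" where
  "magnetic_field B \<longleftrightarrow>
     (\<forall>j k. smooth_bdd (B j k)) \<and>
     (\<forall>j k y. B j k y = - B k j y) \<and>
     (\<forall>i j k y. dpart i (B j k) y + dpart j (B k i) y + dpart k (B i j) y = 0)"

definition transversal_gauge :: "('n::finite \<Rightarrow> 'n \<Rightarrow> real^'n \<Rightarrow> real) \<Rightarrow> real^'n \<Rightarrow> real^'n" where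
  "transversal_gauge B y = (\<chi> j. - (\<Sum>k\<in>UNIV. integral {0..1} (\<lambda>s. s * y $ k * B j k (s *\<^sub>R y))))"

definition mag_phase :: "(real^'n::finite \<Rightarrow> real^'n) \<Rightarrow> real^'n \<Rightarrow> real^'n \<Rightarrow> real" where
  "mag_phase \<A> y x = (y - x) \<bullet> integral {0..1} (\<lambda>s. \<A> ((1 - s) *\<^sub>R x + s *\<^sub>R y))"

definition gwin :: "real^'n::finite \<Rightarrow> real" where
  "gwin y = (2 * pi) powr (- real CARD('n) / 2) * pi powr (- real CARD('n) / 4) * exp (- (norm y)\<^sup>2 / 2)"

definition mag_window :: "(real^'n::finite \<Rightarrow> real^'n) \<Rightarrow> real^'n \<Rightarrow> real^'n \<Rightarrow> real^'n \<Rightarrow> complex" where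
  "mag_window \<A> x \<xi> = (\<lambda>y. cis (- (\<xi> \<bullet> (y - x))) * complex_of_real (gwin (y - x)) * cis (- mag_phase \<A> y x))"

definition mag_stft :: "(real^'n::finite \<Rightarrow> real^'n) \<Rightarrow> ((real^'n \<Rightarrow> complex) \<Rightarrow> complex) \<Rightarrow> (real^'n) \<times> (real^'n) \<Rightarrow> complex" where
  "mag_stft \<A> u = (\<lambda>(x, \<xi>). u (mag_window \<A> x \<xi>))"

definition Lp_norm :: "ennreal \<Rightarrow> ('a::euclidean_space \<Rightarrow> complex) \<Rightarrow> ereal" where
  "Lp_norm p f = (if p = \<infinity> then esssup lborel (\<lambda>z. ereal (norm (f z)))
     else (let I = (\<integral>\<^sup>+ z. ennreal (norm (f z) powr enn2real p) \<partial>lborel)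
           in if I = \<infinity> then \<infinity> else ereal (enn2real I powr (1 / enn2real p))))"

definition Mnorm :: "ennreal \<Rightarrow> (real^'n::finite \<Rightarrow> real^'n) \<Rightarrow> ((real^'n \<Rightarrow> complex) \<Rightarrow> complex) \<Rightarrow> ereal" where
  "Mnorm p \<A> u = Lp_norm p (mag_stft \<A> u)"

definition Mspace :: "ennreal \<Rightarrow> (real^'n::finite \<Rightarrow> real^'n) \<Rightarrow> ((real^'n \<Rightarrow> complex) \<Rightarrow> complex) set" where
  "Mspace p \<A> =
     (if p = \<infinity> then
        {u. tempered u \<and> mag_stft \<A> u \<in> borel_measurable lborel \<and> Mnorm p \<A> u < \<infinity> \<and>
            (\<exists>f. (\<forall>n. f n \<in> Schwartz) \<and>
                 ((\<lambda>n. Mnorm p \<A> (\<lambda>\<phi>. u \<phi> - emb (f n) \<phi>)) \<longlongrightarrow> 0) sequentially)}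
      else {u. tempered u \<and> mag_stft \<A> u \<in> borel_measurable lborel \<and> Mnorm p \<A> u < \<infinity>})"

end

theory Submission
  imports Defs
begin

text \<open>The isometry is the gauge transformation \<open>u \<mapsto> e^(-iv) u\<close>, acting on distributions by
  \<open>(e^(-iv) u)(\<phi>) = u(e^(-iv) \<phi>)\<close>. Integrating \<open>\<nabla>v\<close> along the segment from \<open>x\<close> to \<open>y\<close> gives
  \<open>\<phi>^A'(y,x) = \<phi>^A(y,x) + v(y) - v(x)\<close>, so the \<open>A'\<close>-window at \<open>(x,\<xi>)\<close> is \<open>e^(iv(x)) e^(-iv)\<close> times
  the \<open>A\<close>-window. Hence \<open>T^A' u\<close> and \<open>T^A (e^(-iv) u)\<close> differ by the unimodular factor
  \<open>e^(iv(x))\<close> and have the same \<open>L^p\<close> norm. Because \<open>v\<close> is in \<open>C^\<infinity>_pol\<close>, all derivatives of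
  \<open>e^(\<plusminus>iv)\<close> grow at most polynomially, so multiplication by \<open>e^(\<plusminus>iv)\<close> is continuous on the
  Schwartz space; it therefore preserves tempered distributions and, for \<open>p = \<infinity>\<close>, Schwartz
  approximability, and multiplication by \<open>e^(iv)\<close> is its inverse.\<close>

section \<open>Calculus of partial derivatives\<close>

lemma diffs_Nil [simp]: "diffs [] f = f"
  by (simp add: diffs_def)

lemma diffs_Cons [simp]: "diffs (i # is) f = dpart i (diffs is f)"
  by (simp add: diffs_def)

lemma diffs_append: "diffs (is @ js) f = diffs is (diffs js f)"
  by (simp add: diffs_def)

lemma dpart_has_derivative: "(f has_derivative D) (at x) \<Longrightarrow> dpart i f x = D (axis i 1)"
  unfolding dpart_def using frechet_derivative_at by metis

lemma smooth_differentiable: "smooth f \<Longrightarrow> f differentiable at x"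
  unfolding smooth_def by (metis diffs_Nil)

lemma smooth_diffs: "smooth f \<Longrightarrow> smooth (diffs js f)"
  unfolding smooth_def by (metis diffs_append)

lemma smooth_dpart: "smooth f \<Longrightarrow> smooth (dpart i f)"
  using smooth_diffs[of f "[i]"] by simp

lemma continuous_on_smooth: "smooth f \<Longrightarrow> continuous_on S f"
  by (intro differentiable_imp_continuous_on differentiable_at_imp_differentiable_on smooth_differentiable)

lemma dpart_add:
  fixes f g :: "real^'n::finite \<Rightarrow> 'b::real_normed_vector"
  assumes "f differentiable at x" "g differentiable at x"
  shows "dpart i (\<lambda>x. f x + g x) x = dpart i f x + dpart i g x"
proof -
  obtain D E where D: "(f has_derivative D) (at x)" and E: "(g has_derivative E) (at x)"
    using assms differentiable_def by blast
  have "((\<lambda>x. f x + g x) has_derivative (\<lambda>h. D h + E h)) (at x)"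
    using D E by (rule has_derivative_add)
  then show ?thesis
    by (simp add: dpart_has_derivative dpart_has_derivative[OF D] dpart_has_derivative[OF E])
qed

lemma dpart_mult:
  fixes f g :: "real^'n::finite \<Rightarrow> 'b::real_normed_algebra"
  assumes "f differentiable at x" "g differentiable at x"
  shows "dpart i (\<lambda>x. f x * g x) x = f x * dpart i g x + dpart i f x * g x"
proof -
  obtain D E where D: "(f has_derivative D) (at x)" and E: "(g has_derivative E) (at x)"
    using assms differentiable_def by blast
  have "((\<lambda>x. f x * g x) has_derivative (\<lambda>h. f x * E h + D h * g x)) (at x)"
    using D E by (rule has_derivative_mult)
  then show ?thesis
    by (simp add: dpart_has_derivative dpart_has_derivative[OF D] dpart_has_derivative[OF E])
qed

lemma dpart_const: "dpart i (\<lambda>x::real^'n::finite. c) x = 0"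
proof -
  have "((\<lambda>x::real^'n. c) has_derivative (\<lambda>h. 0)) (at x)" by (rule has_derivative_const)
  from dpart_has_derivative[OF this, of i] show ?thesis by simp
qed

lemma has_derivative_of_real_complex:
  "(g has_derivative D) F \<Longrightarrow> ((\<lambda>x. complex_of_real (g x)) has_derivative (\<lambda>h. of_real (D h))) F"
  by (rule bounded_linear.has_derivative[OF bounded_linear_of_real])

lemma differentiable_of_real_complex:
  "g differentiable at x \<Longrightarrow> (\<lambda>x. complex_of_real (g x)) differentiable at x"
  unfolding differentiable_def using has_derivative_of_real_complex by blast

lemma dpart_of_real:
  fixes g :: "real^'n::finite \<Rightarrow> real"
  assumes "g differentiable at x"
  shows "dpart i (\<lambda>x. complex_of_real (g x)) x = of_real (dpart i g x)"
proof -
  obtain D where D: "(g has_derivative D) (at x)" using assms differentiable_def by blast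
  from dpart_has_derivative[OF has_derivative_of_real_complex[OF D]] show ?thesis
    by (simp add: dpart_has_derivative[OF D])
qed

lemma differentiable_cis_scaled:
  "g differentiable at x \<Longrightarrow> (\<lambda>x. cis (s * g x)) differentiable at x"
  unfolding differentiable_def using has_derivative_cis[OF has_derivative_mult_right] by blast

lemma dpart_cis_scaled:
  fixes g :: "real^'n::finite \<Rightarrow> real"
  assumes "g differentiable at x"
  shows "dpart i (\<lambda>x. cis (s * g x)) x = cis (s * g x) * (\<i> * of_real s * of_real (dpart i g x))"
proof -
  obtain D where D: "(g has_derivative D) (at x)" using assms differentiable_def by blast
  have "((\<lambda>x. cis (s * g x)) has_derivative (\<lambda>h. (s * D h) *\<^sub>R (\<i> * cis (s * g x)))) (at x)"
    using D by (intro has_derivative_cis has_derivative_mult_right)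
  from dpart_has_derivative[OF this, of i] show ?thesis
    using dpart_has_derivative[OF D] by (simp add: scaleR_conv_of_real mult_ac)
qed

lemma diffs_add:
  fixes f g :: "real^'n::finite \<Rightarrow> 'b::real_normed_vector"
  assumes "smooth f" "smooth g"
  shows "diffs is (\<lambda>x. f x + g x) = (\<lambda>x. diffs is f x + diffs is g x)"
proof (induction "is")
  case Nil
  then show ?case by simp
next
  case (Cons i js)
  have "diffs (i # js) (\<lambda>x. f x + g x) = dpart i (\<lambda>x. diffs js f x + diffs js g x)"
    using Cons by simp
  also have "\<dots> = (\<lambda>x. diffs (i # js) f x + diffs (i # js) g x)"
    using assms by (auto intro!: dpart_add smooth_differentiable smooth_diffs)
  finally show ?case .
qed

lemma smooth_add:
  fixes f g :: "real^'n::finite \<Rightarrow> 'b::real_normed_vector"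
  assumes "smooth f" "smooth g"
  shows "smooth (\<lambda>x. f x + g x)"
  using assms unfolding smooth_def diffs_add[OF assms] by auto

lemma diffs_const: "diffs is (\<lambda>x. c) = (if is = [] then (\<lambda>x. c) else (\<lambda>x. 0))"
  by (induction "is") (auto simp: dpart_const)

lemma smooth_const: "smooth (\<lambda>x. c)"
  unfolding smooth_def diffs_const by auto

lemma diffs_of_real:
  fixes g :: "real^'n::finite \<Rightarrow> real"
  assumes "smooth g"
  shows "diffs is (\<lambda>x. complex_of_real (g x)) = (\<lambda>x. of_real (diffs is g x))"
  by (induction "is")
    (simp_all add: dpart_of_real smooth_differentiable[OF smooth_diffs[OF assms]])

lemma smooth_of_real:
  fixes g :: "real^'n::finite \<Rightarrow> real"
  assumes "smooth g"
  shows "smooth (\<lambda>x. complex_of_real (g x))"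
  unfolding smooth_def diffs_of_real[OF assms]
  using assms[unfolded smooth_def] differentiable_of_real_complex by blast

text \<open>\<open>leibniz_splits is\<close> lists all \<open>2 ^ length is\<close> ways of distributing the derivatives in
  \<open>is\<close> between the two factors of a product, with repetitions: this avoids binomial coefficients.\<close>

fun leibniz_splits :: "'a list \<Rightarrow> ('a list \<times> 'a list) list" where
  "leibniz_splits [] = [([], [])]"
| "leibniz_splits (i # is) =
     concat (map (\<lambda>t. [(i # fst t, snd t), (fst t, i # snd t)]) (leibniz_splits is))"

lemma length_concat_map_pair: "length (concat (map (\<lambda>t. [a t, b t]) xs)) = 2 * length xs"
  by (induction xs) simp_all

lemma sum_list_concat_map_pair:
  "sum_list (map Q (concat (map (\<lambda>t. [a t, b t]) xs))) = sum_list (map (\<lambda>t. Q (a t) + Q (b t)) xs)"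
  by (induction xs) (simp_all add: add.assoc)

lemma length_leibniz_splits: "length (leibniz_splits is) = 2 ^ length is"
  by (induction "is") (simp_all add: length_concat_map_pair)

lemma leibniz_splits_length:
  "t \<in> set (leibniz_splits is) \<Longrightarrow> length (fst t) + length (snd t) = length is"
  by (induction "is" arbitrary: t) auto

lemma differentiable_sum_list:
  fixes F :: "'c \<Rightarrow> real^'n::finite \<Rightarrow> 'b::real_normed_vector"
  assumes "\<forall>t\<in>set ts. F t differentiable at x"
  shows "(\<lambda>x. sum_list (map (\<lambda>t. F t x) ts)) differentiable at x"
  using assms by (induction ts) simp_all

lemma dpart_sum_list:
  fixes F :: "'c \<Rightarrow> real^'n::finite \<Rightarrow> 'b::real_normed_vector"
  assumes "\<forall>t\<in>set ts. F t differentiable at x"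
  shows "dpart i (\<lambda>x. sum_list (map (\<lambda>t. F t x) ts)) x = sum_list (map (\<lambda>t. dpart i (F t) x) ts)"
  using assms
proof (induction ts)
  case Nil
  then show ?case by (simp add: dpart_const)
next
  case (Cons t ts)
  then have "dpart i (\<lambda>x. F t x + sum_list (map (\<lambda>t. F t x) ts)) x
      = dpart i (F t) x + dpart i (\<lambda>x. sum_list (map (\<lambda>t. F t x) ts)) x"
    by (intro dpart_add differentiable_sum_list) auto
  then show ?case using Cons by simp
qed

lemma diffs_mult:
  fixes f g :: "real^'n::finite \<Rightarrow> 'b::real_normed_algebra"
  assumes f: "smooth f" and g: "smooth g"
  shows "diffs is (\<lambda>x. f x * g x) =
    (\<lambda>x. sum_list (map (\<lambda>t. diffs (fst t) f x * diffs (snd t) g x) (leibniz_splits is)))"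
proof (induction "is")
  case Nil
  then show ?case by simp
next
  case (Cons i js)
  have df: "diffs a f differentiable at x" and dg: "diffs a g differentiable at x" for a x
    using f g by (simp_all add: smooth_differentiable smooth_diffs)
  show ?case
  proof
    fix x
    have "diffs (i # js) (\<lambda>x. f x * g x) x
       = dpart i (\<lambda>x. sum_list (map (\<lambda>t. diffs (fst t) f x * diffs (snd t) g x) (leibniz_splits js))) x"
      using Cons by simp
    also have "\<dots> = sum_list (map (\<lambda>t. dpart i (\<lambda>x. diffs (fst t) f x * diffs (snd t) g x) x)
                                  (leibniz_splits js))"
      using df dg by (intro dpart_sum_list) simp
    also have "\<dots> = sum_list (map (\<lambda>t. diffs (i # fst t) f x * diffs (snd t) g x
                                       + diffs (fst t) f x * diffs (i # snd t) g x) (leibniz_splits js))"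
      by (simp add: dpart_mult df dg add.commute)
    also have "\<dots> = sum_list (map (\<lambda>t. diffs (fst t) f x * diffs (snd t) g x) (leibniz_splits (i # js)))"
      by (simp only: leibniz_splits.simps sum_list_concat_map_pair fst_conv snd_conv)
    finally show "diffs (i # js) (\<lambda>x. f x * g x) x =
        sum_list (map (\<lambda>t. diffs (fst t) f x * diffs (snd t) g x) (leibniz_splits (i # js)))" .
  qed
qed

lemma smooth_mult:
  fixes f g :: "real^'n::finite \<Rightarrow> 'b::real_normed_algebra"
  assumes f: "smooth f" and g: "smooth g"
  shows "smooth (\<lambda>x. f x * g x)"
  unfolding smooth_def diffs_mult[OF f g]
  using smooth_differentiable[OF smooth_diffs[OF f]] smooth_differentiable[OF smooth_diffs[OF g]]
  by (intro allI differentiable_sum_list) simp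

section \<open>Smooth functions of polynomial growth\<close>

definition poly_bounded :: "(real^'n::finite \<Rightarrow> real) \<Rightarrow> bool" where
  "poly_bounded F \<longleftrightarrow> (\<exists>C N. \<forall>x. F x \<le> C * (1 + norm x) ^ N)"

lemma poly_boundedE:
  assumes "poly_bounded F"
  obtains C N where "C \<ge> 0" "\<And>x. F x \<le> C * (1 + norm x) ^ N"
proof -
  obtain C N where "\<And>x. F x \<le> C * (1 + norm x) ^ N"
    using assms unfolding poly_bounded_def by blast
  then have "F x \<le> max C 0 * (1 + norm x) ^ N" for x
    by (smt (verit, best) mult_right_mono norm_ge_zero zero_le_power)
  then show ?thesis using that[of "max C 0" N] by auto
qed

lemma poly_bounded_const: "poly_bounded (\<lambda>x. c)"
  unfolding poly_bounded_def by (rule exI[of _ c], rule exI[of _ 0]) simp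

lemma poly_bounded_mono: "poly_bounded G \<Longrightarrow> (\<And>x. F x \<le> G x) \<Longrightarrow> poly_bounded F"
  unfolding poly_bounded_def by (meson order_trans)

lemma poly_bounded_add:
  assumes "poly_bounded F" "poly_bounded G"
  shows "poly_bounded (\<lambda>x. F x + G x)"
proof -
  obtain C1 N1 where C1: "C1 \<ge> 0" "\<And>x. F x \<le> C1 * (1 + norm x) ^ N1"
    using poly_boundedE[OF assms(1)] by blast
  obtain C2 N2 where C2: "C2 \<ge> 0" "\<And>x. G x \<le> C2 * (1 + norm x) ^ N2"
    using poly_boundedE[OF assms(2)] by blast
  have "F x + G x \<le> (C1 + C2) * (1 + norm x) ^ (N1 + N2)" for x
  proof -
    have "C1 * (1 + norm x) ^ N1 \<le> C1 * (1 + norm x) ^ (N1 + N2)"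
      using C1(1) by (intro mult_left_mono power_increasing) auto
    moreover have "C2 * (1 + norm x) ^ N2 \<le> C2 * (1 + norm x) ^ (N1 + N2)"
      using C2(1) by (intro mult_left_mono power_increasing) auto
    ultimately show ?thesis using C1(2)[of x] C2(2)[of x] by (simp add: distrib_right)
  qed
  then show ?thesis unfolding poly_bounded_def by blast
qed

lemma poly_bounded_mult:
  assumes "poly_bounded F" "poly_bounded G" "\<And>x. F x \<ge> 0" "\<And>x. G x \<ge> 0"
  shows "poly_bounded (\<lambda>x. F x * G x)"
proof -
  obtain C1 N1 where C1: "C1 \<ge> 0" "\<And>x. F x \<le> C1 * (1 + norm x) ^ N1"
    using poly_boundedE[OF assms(1)] by blast
  obtain C2 N2 where C2: "C2 \<ge> 0" "\<And>x. G x \<le> C2 * (1 + norm x) ^ N2"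
    using poly_boundedE[OF assms(2)] by blast
  have "F x * G x \<le> (C1 * (1 + norm x) ^ N1) * (C2 * (1 + norm x) ^ N2)" for x
    using C1 C2 assms(3,4) by (intro mult_mono) auto
  then have "F x * G x \<le> (C1 * C2) * (1 + norm x) ^ (N1 + N2)" for x
    by (simp add: power_add mult_ac)
  then show ?thesis unfolding poly_bounded_def by blast
qed

lemma poly_bounded_sum_list:
  "\<forall>t\<in>set ts. poly_bounded (F t) \<Longrightarrow> poly_bounded (\<lambda>x. sum_list (map (\<lambda>t. F t x) ts))"
  by (induction ts) (simp_all add: poly_bounded_const poly_bounded_add)

lemma poly_bounded_sum:
  "finite S \<Longrightarrow> \<forall>s\<in>S. poly_bounded (F s) \<Longrightarrow> poly_bounded (\<lambda>x. \<Sum>s\<in>S. F s x)"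
  by (induction S rule: finite_induct) (simp_all add: poly_bounded_const poly_bounded_add)

lemma norm_sum_list_le: "norm (sum_list (map f xs)) \<le> sum_list (map (\<lambda>t. norm (f t)) xs)"
  by (induction xs) (simp_all add: norm_triangle_le)

definition Cinf_pol_complex :: "(real^'n::finite \<Rightarrow> complex) \<Rightarrow> bool" where
  "Cinf_pol_complex f \<longleftrightarrow> smooth f \<and> (\<forall>is. poly_bounded (\<lambda>x. norm (diffs is f x)))"

lemma Cinf_pol_complex_smooth: "Cinf_pol_complex f \<Longrightarrow> smooth f"
  unfolding Cinf_pol_complex_def by simp

lemma Cinf_pol_complex_const: "Cinf_pol_complex (\<lambda>x. c)"
  unfolding Cinf_pol_complex_def diffs_const by (auto simp: smooth_const poly_bounded_const)

lemma Cinf_pol_complex_add: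
  assumes "Cinf_pol_complex f" "Cinf_pol_complex g"
  shows "Cinf_pol_complex (\<lambda>x. f x + g x)"
proof -
  have s: "smooth f" "smooth g" using assms by (simp_all add: Cinf_pol_complex_smooth)
  show ?thesis unfolding Cinf_pol_complex_def diffs_add[OF s]
  proof (intro conjI allI smooth_add[OF s])
    fix "is"
    have "poly_bounded (\<lambda>x. norm (diffs is f x) + norm (diffs is g x))"
      using assms unfolding Cinf_pol_complex_def by (intro poly_bounded_add) auto
    then show "poly_bounded (\<lambda>x. norm (diffs is f x + diffs is g x))"
      by (rule poly_bounded_mono) (rule norm_triangle_ineq)
  qed
qed

lemma Cinf_pol_complex_mult:
  assumes "Cinf_pol_complex f" "Cinf_pol_complex g"
  shows "Cinf_pol_complex (\<lambda>x. f x * g x)"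
proof -
  have s: "smooth f" "smooth g" using assms by (simp_all add: Cinf_pol_complex_smooth)
  show ?thesis unfolding Cinf_pol_complex_def diffs_mult[OF s]
  proof (intro conjI allI smooth_mult[OF s])
    fix "is"
    have "poly_bounded (\<lambda>x. sum_list (map (\<lambda>t. norm (diffs (fst t) f x) * norm (diffs (snd t) g x))
                                          (leibniz_splits is)))"
      using assms unfolding Cinf_pol_complex_def
      by (intro poly_bounded_sum_list ballI poly_bounded_mult) auto
    then show "poly_bounded (\<lambda>x. norm (sum_list (map (\<lambda>t. diffs (fst t) f x * diffs (snd t) g x)
                                                 (leibniz_splits is))))"
      by (rule poly_bounded_mono) (rule order_trans[OF norm_sum_list_le], simp add: norm_mult)
  qed
qed

lemma Cinf_pol_complex_dpart: "Cinf_pol_complex f \<Longrightarrow> Cinf_pol_complex (dpart i f)"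
  unfolding Cinf_pol_complex_def
  by (metis diffs_append diffs_Cons diffs_Nil append_Cons append_Nil smooth_dpart)

lemma Cinf_pol_complex_of_real:
  assumes "Cinf_pol v"
  shows "Cinf_pol_complex (\<lambda>x. complex_of_real (v x))"
proof -
  have s: "smooth v" using assms unfolding Cinf_pol_def by simp
  show ?thesis unfolding Cinf_pol_complex_def diffs_of_real[OF s]
    using assms smooth_of_real[OF s] unfolding Cinf_pol_def poly_bounded_def by simp
qed

lemma diffs_cis_scaled:
  assumes v: "Cinf_pol v"
  obtains q where "Cinf_pol_complex q" "diffs is (\<lambda>y. cis (s * v y)) = (\<lambda>y. cis (s * v y) * q y)"
proof (induction "is" arbitrary: thesis)
  case Nil
  show ?case by (rule Nil[of "\<lambda>y. 1"]) (simp_all add: Cinf_pol_complex_const)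
next
  case (Cons i js)
  obtain q where q: "Cinf_pol_complex q"
    and e: "diffs js (\<lambda>y. cis (s * v y)) = (\<lambda>y. cis (s * v y) * q y)"
    using Cons.IH by blast
  have sv: "smooth v" using v unfolding Cinf_pol_def by simp
  have sq: "smooth q" using q by (rule Cinf_pol_complex_smooth)
  define q' where "q' y = (\<i> * of_real s * of_real (dpart i v y)) * q y + dpart i q y" for y
  have "dpart i (\<lambda>x. complex_of_real (v x)) = (\<lambda>y. of_real (dpart i v y))"
    by (intro ext dpart_of_real smooth_differentiable[OF sv])
  then have "Cinf_pol_complex (\<lambda>y. complex_of_real (dpart i v y))"
    using Cinf_pol_complex_dpart[OF Cinf_pol_complex_of_real[OF v], of i] by simp
  then have "Cinf_pol_complex q'" unfolding q'_def
    by (intro Cinf_pol_complex_add Cinf_pol_complex_mult Cinf_pol_complex_const Cinf_pol_complex_dpart q)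
  moreover have "diffs (i # js) (\<lambda>y. cis (s * v y)) = (\<lambda>y. cis (s * v y) * q' y)"
  proof
    fix y
    have "diffs (i # js) (\<lambda>y. cis (s * v y)) y = dpart i (\<lambda>y. cis (s * v y) * q y) y"
      using e by simp
    also have "\<dots> = cis (s * v y) * dpart i q y + dpart i (\<lambda>y. cis (s * v y)) y * q y"
      by (intro dpart_mult differentiable_cis_scaled smooth_differentiable sv sq)
    also have "\<dots> = cis (s * v y) * q' y"
      unfolding q'_def dpart_cis_scaled[OF smooth_differentiable[OF sv]] by (simp add: algebra_simps)
    finally show "diffs (i # js) (\<lambda>y. cis (s * v y)) y = cis (s * v y) * q' y" .
  qed
  ultimately show ?case by (rule Cons.prems)
qed

lemma Cinf_pol_complex_cis_scaled:
  fixes v :: "real^'n::finite \<Rightarrow> real"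
  assumes v: "Cinf_pol v"
  shows "Cinf_pol_complex (\<lambda>y. cis (s * v y))"
  unfolding Cinf_pol_complex_def smooth_def
proof (intro conjI allI)
  fix "is" and x :: "real^'n"
  obtain q where q: "Cinf_pol_complex q" and e: "diffs is (\<lambda>y. cis (s * v y)) = (\<lambda>y. cis (s * v y) * q y)"
    using diffs_cis_scaled[OF v] by blast
  have "smooth v" using v unfolding Cinf_pol_def by simp
  then show "diffs is (\<lambda>y. cis (s * v y)) differentiable at x" unfolding e
    by (intro differentiable_mult differentiable_cis_scaled smooth_differentiable
        Cinf_pol_complex_smooth[OF q])
  have "poly_bounded (\<lambda>x. norm (diffs [] q x))" using q unfolding Cinf_pol_complex_def by blast
  then show "poly_bounded (\<lambda>x. norm (diffs is (\<lambda>y. cis (s * v y)) x))"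
    unfolding e by (simp add: norm_mult)
qed

lemma Cinf_pol_complex_diffs_bound:
  fixes m :: "real^'n::finite \<Rightarrow> complex"
  assumes "Cinf_pol_complex m"
  obtains C K where "C \<ge> 0" "\<And>a x. length a \<le> N \<Longrightarrow> norm (diffs a m x) \<le> C * (1 + norm x) ^ K"
proof -
  define L where "L = {a :: 'n list. set a \<subseteq> UNIV \<and> length a \<le> N}"
  have L: "finite L" unfolding L_def by (rule finite_lists_length_le) simp
  then have "poly_bounded (\<lambda>x. \<Sum>a\<in>L. norm (diffs a m x))"
    using assms unfolding Cinf_pol_complex_def by (intro poly_bounded_sum) auto
  then obtain C K where C: "C \<ge> 0" "\<And>x. (\<Sum>a\<in>L. norm (diffs a m x)) \<le> C * (1 + norm x) ^ K"
    using poly_boundedE by blast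
  have "norm (diffs a m x) \<le> C * (1 + norm x) ^ K" if "length a \<le> N" for a x
  proof -
    have "norm (diffs a m x) \<le> (\<Sum>a\<in>L. norm (diffs a m x))"
      using L that unfolding L_def by (intro member_le_sum) auto
    then show ?thesis using C(2)[of x] by linarith
  qed
  with C(1) show ?thesis by (rule that)
qed

section \<open>Multiplication of Schwartz functions and tempered distributions\<close>

definition Schwartz_seminorm_le :: "nat \<Rightarrow> (real^'n::finite \<Rightarrow> complex) \<Rightarrow> real \<Rightarrow> bool" where
  "Schwartz_seminorm_le N \<phi> M \<longleftrightarrow>
     (\<forall>x k is. k \<le> N \<and> length is \<le> N \<longrightarrow> (1 + norm x) ^ k * norm (diffs is \<phi> x) \<le> M)"

lemma tempered_iff:
  "tempered u \<longleftrightarrow>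
     (\<forall>\<phi>. \<phi> \<notin> Schwartz \<longrightarrow> u \<phi> = 0) \<and>
     (\<forall>\<phi>\<in>Schwartz. \<forall>\<psi>\<in>Schwartz. \<forall>a b. u (\<lambda>y. a * \<phi> y + b * \<psi> y) = a * u \<phi> + b * u \<psi>) \<and>
     (\<exists>C N. \<forall>\<phi>\<in>Schwartz. \<forall>M. Schwartz_seminorm_le N \<phi> M \<longrightarrow> norm (u \<phi>) \<le> C * M)"
  unfolding tempered_def Schwartz_seminorm_le_def ..

lemma Schwartz_smooth: "\<phi> \<in> Schwartz \<Longrightarrow> smooth \<phi>"
  unfolding Schwartz_def by simp

lemma Schwartz_seminorm_le_nonneg:
  fixes \<phi> :: "real^'n::finite \<Rightarrow> complex"
  assumes "Schwartz_seminorm_le N \<phi> M"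
  shows "0 \<le> M"
proof -
  have "norm (\<phi> 0) \<le> M"
    using assms[unfolded Schwartz_seminorm_le_def, rule_format, of 0 "[]" 0] by simp
  then show ?thesis by (rule order_trans[OF norm_ge_zero])
qed

lemma finite_uniform_upper_bound:
  fixes f :: "'s \<Rightarrow> 'a \<Rightarrow> real"
  assumes "finite S" "\<forall>s\<in>S. \<exists>C. \<forall>x. f s x \<le> C"
  shows "\<exists>C. \<forall>s\<in>S. \<forall>x. f s x \<le> C"
  using assms
proof (induction S rule: finite_induct)
  case empty
  then show ?case by simp
next
  case (insert s S)
  then obtain C1 C2 where "\<forall>x. f s x \<le> C1" "\<forall>t\<in>S. \<forall>x. f t x \<le> C2" by auto
  then have "\<forall>t\<in>insert s S. \<forall>x. f t x \<le> max C1 C2" by (auto simp: le_max_iff_disj)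
  then show ?case by blast
qed

lemma Schwartz_seminorm_le_exists:
  fixes \<phi> :: "real^'n::finite \<Rightarrow> complex"
  assumes "\<phi> \<in> Schwartz"
  shows "\<exists>M. Schwartz_seminorm_le N \<phi> M"
proof -
  define S where "S = {..N} \<times> {a :: 'n list. set a \<subseteq> UNIV \<and> length a \<le> N}"
  have "finite S" unfolding S_def by (intro finite_cartesian_product finite_lists_length_le) auto
  moreover have "\<forall>s\<in>S. \<exists>C. \<forall>x. (1 + norm x) ^ fst s * norm (diffs (snd s) \<phi> x) \<le> C"
    using assms unfolding Schwartz_def by blast
  ultimately have "\<exists>M. \<forall>s\<in>S. \<forall>x. (1 + norm x) ^ fst s * norm (diffs (snd s) \<phi> x) \<le> M"
    by (rule finite_uniform_upper_bound)
  then obtain M where M: "\<forall>s\<in>S. \<forall>x. (1 + norm x) ^ fst s * norm (diffs (snd s) \<phi> x) \<le> M" ..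
  have "Schwartz_seminorm_le N \<phi> M"
    unfolding Schwartz_seminorm_le_def
  proof (intro allI impI)
    fix x k and "is" :: "'n list"
    assume "k \<le> N \<and> length is \<le> N"
    then have "(k, is) \<in> S" unfolding S_def by simp
    from M[rule_format, OF this, of x] show "(1 + norm x) ^ k * norm (diffs is \<phi> x) \<le> M" by simp
  qed
  then show ?thesis ..
qed

lemma Schwartz_seminorm_le_mult_bound:
  fixes m \<phi> :: "real^'n::finite \<Rightarrow> complex"
  assumes m: "smooth m" and m_bound: "\<And>a x. length a \<le> N \<Longrightarrow> norm (diffs a m x) \<le> C * (1 + norm x) ^ K"
    and C: "C \<ge> 0" and \<phi>: "smooth \<phi>" and M: "Schwartz_seminorm_le (N + K) \<phi> M"
  shows "Schwartz_seminorm_le N (\<lambda>y. m y * \<phi> y) (2 ^ N * C * M)"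
  unfolding Schwartz_seminorm_le_def
proof (intro allI impI)
  fix x :: "real^'n" and k and "is" :: "'n list"
  assume kis: "k \<le> N \<and> length is \<le> N"
  have M': "(1 + norm x) ^ k' * norm (diffs a \<phi> x) \<le> M" if "k' \<le> N + K" "length a \<le> N + K" for k' a
    using M that unfolding Schwartz_seminorm_le_def by blast
  have split_bound: "(1 + norm x) ^ k * (norm (diffs (fst t) m x) * norm (diffs (snd t) \<phi> x)) \<le> C * M"
    if t: "t \<in> set (leibniz_splits is)" for t
  proof -
    have len: "length (fst t) + length (snd t) = length is" by (rule leibniz_splits_length[OF t])
    have "(1 + norm x) ^ k * (norm (diffs (fst t) m x) * norm (diffs (snd t) \<phi> x))
        \<le> (1 + norm x) ^ k * (C * (1 + norm x) ^ K * norm (diffs (snd t) \<phi> x))"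
      using m_bound[of "fst t" x] kis len by (intro mult_left_mono mult_right_mono) auto
    also have "\<dots> = C * ((1 + norm x) ^ (k + K) * norm (diffs (snd t) \<phi> x))"
      by (simp add: power_add mult_ac)
    also have "\<dots> \<le> C * M"
      using kis len by (intro mult_left_mono M' C) auto
    finally show ?thesis .
  qed
  have "(1 + norm x) ^ k * norm (diffs is (\<lambda>y. m y * \<phi> y) x)
      \<le> (1 + norm x) ^ k * sum_list (map (\<lambda>t. norm (diffs (fst t) m x) * norm (diffs (snd t) \<phi> x))
                                          (leibniz_splits is))"
    unfolding diffs_mult[OF m \<phi>]
    by (rule mult_left_mono, rule order_trans[OF norm_sum_list_le]) (simp_all add: norm_mult)
  also have "\<dots> = sum_list (map (\<lambda>t. (1 + norm x) ^ k *
                    (norm (diffs (fst t) m x) * norm (diffs (snd t) \<phi> x))) (leibniz_splits is))"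
    by (simp add: sum_list_const_mult)
  also have "\<dots> \<le> sum_list (map (\<lambda>t. C * M) (leibniz_splits is))"
    by (rule sum_list_mono) (rule split_bound)
  also have "\<dots> = 2 ^ length is * (C * M)"
    by (simp add: sum_list_triv length_leibniz_splits)
  also have "\<dots> \<le> 2 ^ N * C * M"
    using kis C Schwartz_seminorm_le_nonneg[OF M] unfolding mult.assoc
    by (intro mult_right_mono power_increasing) auto
  finally show "(1 + norm x) ^ k * norm (diffs is (\<lambda>y. m y * \<phi> y) x) \<le> 2 ^ N * C * M" .
qed

lemma Schwartz_seminorm_le_mult:
  fixes m :: "real^'n::finite \<Rightarrow> complex"
  assumes m: "Cinf_pol_complex m"
  obtains C N' where "\<And>\<phi> M. \<phi> \<in> Schwartz \<Longrightarrow> Schwartz_seminorm_le N' \<phi> M \<Longrightarrow>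
    Schwartz_seminorm_le N (\<lambda>y. m y * \<phi> y) (C * M)"
proof -
  obtain C K where C: "C \<ge> 0" "\<And>a x. length a \<le> N \<Longrightarrow> norm (diffs a m x) \<le> C * (1 + norm x) ^ K"
    using Cinf_pol_complex_diffs_bound[OF m] by blast
  have "Schwartz_seminorm_le N (\<lambda>y. m y * \<phi> y) (2 ^ N * C * M)"
    if "\<phi> \<in> Schwartz" "Schwartz_seminorm_le (N + K) \<phi> M" for \<phi> M
    using Cinf_pol_complex_smooth[OF m] C(2) C(1) Schwartz_smooth[OF that(1)] that(2)
    by (rule Schwartz_seminorm_le_mult_bound)
  then show ?thesis by (rule that)
qed

lemma Schwartz_mult:
  assumes m: "Cinf_pol_complex m" and \<phi>: "\<phi> \<in> Schwartz"
  shows "(\<lambda>y. m y * \<phi> y) \<in> Schwartz"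
proof -
  have "\<exists>C. \<forall>x. (1 + norm x) ^ k * norm (diffs is (\<lambda>y. m y * \<phi> y) x) \<le> C" for "is" k
  proof -
    obtain C N' where CN': "\<And>\<phi> M. \<phi> \<in> Schwartz \<Longrightarrow> Schwartz_seminorm_le N' \<phi> M \<Longrightarrow>
        Schwartz_seminorm_le (max k (length is)) (\<lambda>y. m y * \<phi> y) (C * M)"
      using Schwartz_seminorm_le_mult[OF m] by blast
    obtain M where "Schwartz_seminorm_le N' \<phi> M"
      using Schwartz_seminorm_le_exists[OF \<phi>] by blast
    from CN'[OF \<phi> this] show ?thesis
      unfolding Schwartz_seminorm_le_def by (meson max.cobounded1 max.cobounded2)
  qed
  moreover have "smooth (\<lambda>y. m y * \<phi> y)"
    by (intro smooth_mult Cinf_pol_complex_smooth[OF m] Schwartz_smooth[OF \<phi>])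
  ultimately show ?thesis unfolding Schwartz_def by blast
qed

lemma Schwartz_mult_iff:
  assumes "Cinf_pol_complex m" "Cinf_pol_complex m'" "\<forall>y. m' y * m y = 1"
  shows "(\<lambda>y. m y * \<phi> y) \<in> Schwartz \<longleftrightarrow> \<phi> \<in> Schwartz"
proof
  assume "(\<lambda>y. m y * \<phi> y) \<in> Schwartz"
  from Schwartz_mult[OF assms(2) this] show "\<phi> \<in> Schwartz"
    using assms(3) by (simp add: mult.assoc[symmetric])
qed (rule Schwartz_mult[OF assms(1)])

lemma Schwartz_scale_iff:
  fixes c :: complex
  assumes "c \<noteq> 0"
  shows "(\<lambda>y. c * \<phi> y) \<in> Schwartz \<longleftrightarrow> \<phi> \<in> Schwartz"
  using assms by (intro Schwartz_mult_iff[of "\<lambda>y. c" "\<lambda>y. 1 / c"]) (simp_all add: Cinf_pol_complex_const)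

definition mult_distr ::
  "(real^'n::finite \<Rightarrow> complex) \<Rightarrow> ((real^'n \<Rightarrow> complex) \<Rightarrow> complex) \<Rightarrow> ((real^'n \<Rightarrow> complex) \<Rightarrow> complex)"
  where "mult_distr m u = (\<lambda>\<phi>. u (\<lambda>y. m y * \<phi> y))"

lemma mult_distr_mult_distr_inverse:
  "\<forall>y. m y * m' y = 1 \<Longrightarrow> mult_distr m' (mult_distr m u) = u"
  unfolding mult_distr_def by (simp add: mult.assoc[symmetric])

lemma tempered_mult_distr:
  fixes m :: "real^'n::finite \<Rightarrow> complex"
  assumes m: "Cinf_pol_complex m" and m': "Cinf_pol_complex m'" and inv: "\<forall>y. m' y * m y = 1"
    and u: "tempered u"
  shows "tempered (mult_distr m u)"
proof -
  have u_junk: "\<And>\<phi>. \<phi> \<notin> Schwartz \<Longrightarrow> u \<phi> = 0"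
    and u_lin: "\<And>\<phi> \<psi> a b. \<phi> \<in> Schwartz \<Longrightarrow> \<psi> \<in> Schwartz \<Longrightarrow>
                  u (\<lambda>y. a * \<phi> y + b * \<psi> y) = a * u \<phi> + b * u \<psi>"
    using u unfolding tempered_iff by blast+
  obtain C N where u_bound: "\<And>\<phi> M. \<phi> \<in> Schwartz \<Longrightarrow> Schwartz_seminorm_le N \<phi> M \<Longrightarrow> norm (u \<phi>) \<le> C * M"
    using u unfolding tempered_iff by blast
  obtain K N' where m_bound: "\<And>\<phi> M. \<phi> \<in> Schwartz \<Longrightarrow> Schwartz_seminorm_le N' \<phi> M \<Longrightarrow>
      Schwartz_seminorm_le N (\<lambda>y. m y * \<phi> y) (K * M)"
    using Schwartz_seminorm_le_mult[OF m] by blast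
  note iff = Schwartz_mult_iff[OF m m' inv]
  show ?thesis unfolding tempered_iff mult_distr_def
  proof (intro conjI allI impI ballI exI)
    fix \<phi> :: "real^'n \<Rightarrow> complex"
    assume "\<phi> \<notin> Schwartz"
    then show "u (\<lambda>y. m y * \<phi> y) = 0" using u_junk iff by blast
  next
    fix \<phi> \<psi> :: "real^'n \<Rightarrow> complex" and a b
    assume "\<phi> \<in> Schwartz" "\<psi> \<in> Schwartz"
    then have "u (\<lambda>y. a * (m y * \<phi> y) + b * (m y * \<psi> y)) =
               a * u (\<lambda>y. m y * \<phi> y) + b * u (\<lambda>y. m y * \<psi> y)"
      using iff by (intro u_lin) auto
    then show "u (\<lambda>y. m y * (a * \<phi> y + b * \<psi> y)) =
               a * u (\<lambda>y. m y * \<phi> y) + b * u (\<lambda>y. m y * \<psi> y)"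
      by (simp add: algebra_simps)
  next
    fix \<phi> :: "real^'n \<Rightarrow> complex" and M
    assume "\<phi> \<in> Schwartz" "Schwartz_seminorm_le N' \<phi> M"
    then have "norm (u (\<lambda>y. m y * \<phi> y)) \<le> C * (K * M)"
      using iff by (intro u_bound m_bound) auto
    then show "norm (u (\<lambda>y. m y * \<phi> y)) \<le> C * K * M" by (simp add: mult.assoc)
  qed
qed

section \<open>Multipliers acting on magnetic modulation spaces\<close>

definition complex_homogeneous :: "((real^'n::finite \<Rightarrow> complex) \<Rightarrow> complex) \<Rightarrow> bool" where
  "complex_homogeneous w \<longleftrightarrow> (\<forall>c \<phi>. w (\<lambda>y. c * \<phi> y) = c * w \<phi>)"

text \<open>Homogeneity also holds off the Schwartz space, because tempered distributions vanish there
  and \<open>\<phi> \<mapsto> c \<phi>\<close> preserves the Schwartz space for \<open>c \<noteq> 0\<close>.\<close>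

lemma tempered_complex_homogeneous:
  fixes u :: "(real^'n::finite \<Rightarrow> complex) \<Rightarrow> complex"
  assumes u: "tempered u"
  shows "complex_homogeneous u"
  unfolding complex_homogeneous_def
proof (intro allI)
  fix c :: complex and \<phi> :: "real^'n \<Rightarrow> complex"
  have u_junk: "\<And>\<phi>. \<phi> \<notin> Schwartz \<Longrightarrow> u \<phi> = 0"
    and u_lin: "\<And>\<phi> \<psi> a b. \<phi> \<in> Schwartz \<Longrightarrow> \<psi> \<in> Schwartz \<Longrightarrow>
                  u (\<lambda>y. a * \<phi> y + b * \<psi> y) = a * u \<phi> + b * u \<psi>"
    using u unfolding tempered_iff by blast+
  have u_zero: "u (\<lambda>y. 0) = 0"
    using u_lin[of "\<lambda>y. 0" "\<lambda>y. 0" 0 0] u_junk[of "\<lambda>y. 0"] by fastforce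
  consider "\<phi> \<in> Schwartz" | "c = 0" | "\<phi> \<notin> Schwartz" "c \<noteq> 0" by blast
  then show "u (\<lambda>y. c * \<phi> y) = c * u \<phi>"
  proof cases
    case 1
    then show ?thesis using u_lin[OF 1 1, of c 0] by simp
  next
    case 2
    then show ?thesis using u_zero by simp
  next
    case 3
    then show ?thesis using u_junk Schwartz_scale_iff[of c \<phi>] by simp
  qed
qed

lemma emb_complex_homogeneous: "complex_homogeneous (emb f)"
  unfolding complex_homogeneous_def
proof (intro allI)
  fix c :: complex and \<phi>
  show "emb f (\<lambda>y. c * \<phi> y) = c * emb f \<phi>"
  proof (cases "c = 0")
    case True
    then show ?thesis by (simp add: emb_def)
  next
    case False
    then show ?thesis unfolding emb_def Schwartz_scale_iff[OF False]
      by (simp add: mult.left_commute[of _ c])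
  qed
qed

lemma complex_homogeneous_diff:
  "complex_homogeneous u \<Longrightarrow> complex_homogeneous w \<Longrightarrow> complex_homogeneous (\<lambda>\<phi>. u \<phi> - w \<phi>)"
  unfolding complex_homogeneous_def by (simp add: right_diff_distrib)

lemma mult_distr_emb:
  assumes "Cinf_pol_complex m" "Cinf_pol_complex m'" "\<forall>y. m' y * m y = 1"
  shows "mult_distr m (emb f) = emb (\<lambda>y. m y * f y)"
proof -
  have reorder: "f y * (m y * \<phi> y) = m y * f y * \<phi> y" for y \<phi> by (simp add: mult_ac)
  show ?thesis unfolding mult_distr_def emb_def Schwartz_mult_iff[OF assms] reorder ..
qed

lemma cnj_mult_self_norm_1: "norm (z :: complex) = 1 \<Longrightarrow> cnj z * z = 1"
  using complex_norm_square[of z] by (simp add: mult.commute)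

lemma mag_stft_mult_distr:
  fixes A1 A2 :: "real^'n::finite \<Rightarrow> real^'n"
  assumes W: "\<forall>x \<xi>. mag_window A2 x \<xi> = (\<lambda>y. c x * (m y * mag_window A1 x \<xi> y))"
    and c: "\<forall>x. norm (c x) = 1" and w: "complex_homogeneous w"
  shows "mag_stft A1 (mult_distr m w) = (\<lambda>z. cnj (c (fst z)) * mag_stft A2 w z)"
proof
  fix z :: "(real^'n) \<times> (real^'n)"
  obtain x \<xi> where z: "z = (x, \<xi>)" by (cases z)
  have "cnj (c x) * c x = 1" using c by (simp add: cnj_mult_self_norm_1)
  moreover have "mag_stft A2 w z = c x * mag_stft A1 (mult_distr m w) z"
    unfolding z mag_stft_def mult_distr_def using W w unfolding complex_homogeneous_def by simp
  ultimately show "mag_stft A1 (mult_distr m w) z = cnj (c (fst z)) * mag_stft A2 w z"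
    by (simp add: z mult.assoc[symmetric])
qed

lemma Mnorm_mult_distr:
  assumes W: "\<forall>x \<xi>. mag_window A2 x \<xi> = (\<lambda>y. c x * (m y * mag_window A1 x \<xi> y))"
    and c: "\<forall>x. norm (c x) = 1" and w: "complex_homogeneous w"
  shows "Mnorm p A1 (mult_distr m w) = Mnorm p A2 w"
  unfolding Mnorm_def Lp_norm_def mag_stft_mult_distr[OF W c w] by (simp add: norm_mult c)

lemma Mnorm_mult_distr_diff_emb:
  fixes A1 A2 :: "real^'n::finite \<Rightarrow> real^'n"
  assumes m: "Cinf_pol_complex m" and m': "Cinf_pol_complex m'" and inv: "\<forall>y. m' y * m y = 1"
    and W: "\<forall>x \<xi>. mag_window A2 x \<xi> = (\<lambda>y. c x * (m y * mag_window A1 x \<xi> y))"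
    and c: "\<forall>x. norm (c x) = 1" and u: "complex_homogeneous u"
  shows "Mnorm p A1 (\<lambda>\<phi>. mult_distr m u \<phi> - emb (\<lambda>y. m y * f y) \<phi>) =
         Mnorm p A2 (\<lambda>\<phi>. u \<phi> - emb f \<phi>)"
proof -
  have "(\<lambda>\<phi>. mult_distr m u \<phi> - emb (\<lambda>y. m y * f y) \<phi>) = mult_distr m (\<lambda>\<phi>. u \<phi> - emb f \<phi>)"
    unfolding mult_distr_emb[OF m m' inv, symmetric] by (simp add: mult_distr_def)
  then show ?thesis
    using Mnorm_mult_distr[OF W c complex_homogeneous_diff[OF u emb_complex_homogeneous]] by simp
qed

lemma Mspace_mult_distr:
  fixes A1 A2 :: "real^'n::finite \<Rightarrow> real^'n"
  assumes m: "Cinf_pol_complex m" and m': "Cinf_pol_complex m'" and inv: "\<forall>y. m' y * m y = 1"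
    and cc: "continuous_on UNIV c" and c: "\<forall>x. norm (c x) = 1"
    and W: "\<forall>x \<xi>. mag_window A2 x \<xi> = (\<lambda>y. c x * (m y * mag_window A1 x \<xi> y))"
    and u: "u \<in> Mspace p A2"
  shows "mult_distr m u \<in> Mspace p A1" and "Mnorm p A1 (mult_distr m u) = Mnorm p A2 u"
proof -
  have tu: "tempered u" and meas: "mag_stft A2 u \<in> borel_measurable lborel"
    and fin: "Mnorm p A2 u < \<infinity>"
    using u unfolding Mspace_def by (auto split: if_splits)
  have hu: "complex_homogeneous u" by (rule tempered_complex_homogeneous[OF tu])
  show norm_eq: "Mnorm p A1 (mult_distr m u) = Mnorm p A2 u"
    by (rule Mnorm_mult_distr[OF W c hu])
  have T: "tempered (mult_distr m u)" by (rule tempered_mult_distr[OF m m' inv tu])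
  have "(\<lambda>z::(real^'n) \<times> (real^'n). cnj (c (fst z))) \<in> borel_measurable borel"
    by (intro borel_measurable_continuous_onI continuous_intros continuous_on_compose2[OF cc]) auto
  then have M: "mag_stft A1 (mult_distr m u) \<in> borel_measurable lborel"
    unfolding mag_stft_mult_distr[OF W c hu] using meas by (intro borel_measurable_times) auto
  show "mult_distr m u \<in> Mspace p A1"
  proof (cases "p = \<infinity>")
    case False
    then show ?thesis using T M norm_eq fin unfolding Mspace_def by simp
  next
    case True
    obtain f where f: "\<And>n. f n \<in> Schwartz"
      and lim: "(\<lambda>n. Mnorm p A2 (\<lambda>\<phi>. u \<phi> - emb (f n) \<phi>)) \<longlonglongrightarrow> 0"
      using u True unfolding Mspace_def by auto
    define g where "g n y = m y * f n y" for n y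
    have g: "g n \<in> Schwartz" for n unfolding g_def using Schwartz_mult[OF m f] .
    have g_dist: "Mnorm p A1 (\<lambda>\<phi>. mult_distr m u \<phi> - emb (g n) \<phi>) =
                  Mnorm p A2 (\<lambda>\<phi>. u \<phi> - emb (f n) \<phi>)" for n
      unfolding g_def by (rule Mnorm_mult_distr_diff_emb[OF m m' inv W c hu])
    have "(\<lambda>n. Mnorm p A1 (\<lambda>\<phi>. mult_distr m u \<phi> - emb (g n) \<phi>)) \<longlonglongrightarrow> 0"
      using lim by (simp only: g_dist)
    with g have "\<exists>f. (\<forall>n. f n \<in> Schwartz) \<and>
        (\<lambda>n. Mnorm p A1 (\<lambda>\<phi>. mult_distr m u \<phi> - emb (f n) \<phi>)) \<longlonglongrightarrow> 0"
      by blast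
    then show ?thesis using T M norm_eq fin True unfolding Mspace_def by auto
  qed
qed

lemma bij_betw_mult_distr_Mspace:
  assumes m: "Cinf_pol_complex m" and m': "Cinf_pol_complex m'" and inv: "\<forall>y. m' y * m y = 1"
    and cc: "continuous_on UNIV c" and c: "\<forall>x. norm (c x) = 1"
    and W: "\<forall>x \<xi>. mag_window A2 x \<xi> = (\<lambda>y. c x * (m y * mag_window A1 x \<xi> y))"
  shows "bij_betw (mult_distr m) (Mspace p A2) (Mspace p A1)"
proof -
  have inv': "\<forall>y. m y * m' y = 1" using inv by (simp add: mult.commute)
  have W': "\<forall>x \<xi>. mag_window A1 x \<xi> = (\<lambda>y. cnj (c x) * (m' y * mag_window A2 x \<xi> y))"
  proof (intro allI ext)
    fix x \<xi> y
    have "cnj (c x) * c x = 1" using c by (simp add: cnj_mult_self_norm_1)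
    then have "cnj (c x) * (m' y * mag_window A2 x \<xi> y) = (m' y * m y) * mag_window A1 x \<xi> y"
      using W by (simp add: mult_ac)
    then show "mag_window A1 x \<xi> y = cnj (c x) * (m' y * mag_window A2 x \<xi> y)"
      using inv by simp
  qed
  have cc': "continuous_on UNIV (\<lambda>x. cnj (c x))" using cc by (intro continuous_intros)
  have c': "\<forall>x. norm (cnj (c x)) = 1" using c by simp
  show ?thesis
    using Mspace_mult_distr(1)[OF m m' inv cc c W] Mspace_mult_distr(1)[OF m' m inv' cc' c' W']
      mult_distr_mult_distr_inverse[OF inv] mult_distr_mult_distr_inverse[OF inv']
    by (intro bij_betw_byWitness[where f'="mult_distr m'"]) auto
qed

section \<open>Change of gauge\<close>

lemma continuous_on_transversal_gauge:
  fixes B :: "'n::finite \<Rightarrow> 'n \<Rightarrow> real^'n \<Rightarrow> real"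
  assumes cB: "\<And>j k. continuous_on UNIV (B j k)"
  shows "continuous_on UNIV (transversal_gauge B)"
proof -
  have "continuous_on UNIV (\<lambda>y. integral {0..1} (\<lambda>s. s * y $ k * B j k (s *\<^sub>R y)))" for j k
  proof -
    have "continuous_on (UNIV \<times> cbox 0 1) (\<lambda>z::(real^'n) \<times> real. B j k (snd z *\<^sub>R fst z))"
      by (intro continuous_on_compose2[OF cB] continuous_intros) auto
    then have "continuous_on (UNIV \<times> cbox 0 1) (\<lambda>(y, s::real). s * y $ k * B j k (s *\<^sub>R y))"
      unfolding split_beta by (intro continuous_intros)
    from integral_continuous_on_param[OF this] show ?thesis by (simp only: box_real(2))
  qed
  then show ?thesis unfolding transversal_gauge_def[abs_def]
    by (intro continuous_on_vec_lambda continuous_intros)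
qed

lemma has_derivative_eq_inner_grad:
  fixes v :: "real^'n::finite \<Rightarrow> real"
  assumes D: "(v has_derivative D) (at z)"
  shows "D h = h \<bullet> grad v z"
proof -
  have lin: "linear D" using has_derivative_bounded_linear[OF D] bounded_linear.linear by blast
  have "D h = D (\<Sum>j\<in>UNIV. h $ j *\<^sub>R axis j 1)"
    using basis_expansion[of h] by (simp add: scalar_mult_eq_scaleR)
  also have "\<dots> = (\<Sum>j\<in>UNIV. h $ j * D (axis j 1))"
    by (simp add: linear_sum[OF lin] linear_scale[OF lin])
  also have "\<dots> = h \<bullet> grad v z"
    unfolding inner_vec_def grad_def using dpart_has_derivative[OF D] by simp
  finally show ?thesis .
qed

lemma mag_phase_add_grad:
  fixes A :: "real^'n::finite \<Rightarrow> real^'n"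
  assumes cA: "continuous_on UNIV A" and sv: "smooth v"
  shows "mag_phase (\<lambda>y. A y + grad v y) y x = mag_phase A y x + v y - v x"
proof -
  define \<gamma> where "\<gamma> s = (1 - s) *\<^sub>R x + s *\<^sub>R y" for s :: real
  have cg: "continuous_on {0..1} \<gamma>" unfolding \<gamma>_def by (intro continuous_intros)
  have "(\<lambda>s. A (\<gamma> s)) integrable_on {0..1}"
    by (intro integrable_continuous_real continuous_on_compose2[OF cA cg]) auto
  moreover have grad_int: "(\<lambda>s. grad v (\<gamma> s)) integrable_on {0..1}"
    unfolding grad_def
    by (intro integrable_continuous_real continuous_on_compose2[OF _ cg, of _ "grad v", unfolded grad_def]
        continuous_on_vec_lambda continuous_on_smooth smooth_dpart sv) auto
  ultimately have split: "integral {0..1} (\<lambda>s. A (\<gamma> s) + grad v (\<gamma> s)) =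
      integral {0..1} (\<lambda>s. A (\<gamma> s)) + integral {0..1} (\<lambda>s. grad v (\<gamma> s))"
    by (rule integral_add)
  have "((\<lambda>s. (y - x) \<bullet> grad v (\<gamma> s)) has_integral (v (\<gamma> 1) - v (\<gamma> 0))) {0..1}"
  proof (rule fundamental_theorem_of_calculus)
    fix s :: real
    obtain D where D: "(v has_derivative D) (at (\<gamma> s))"
      using smooth_differentiable[OF sv] differentiable_def by blast
    have "(\<gamma> has_derivative (\<lambda>t. t *\<^sub>R (y - x))) (at s)"
      unfolding \<gamma>_def by (auto intro!: derivative_eq_intros simp: algebra_simps)
    from diff_chain_at[OF this D]
    have "((\<lambda>s. v (\<gamma> s)) has_derivative (\<lambda>t. t *\<^sub>R ((y - x) \<bullet> grad v (\<gamma> s)))) (at s)"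
      using has_derivative_eq_inner_grad[OF D] linear_scale[OF has_derivative_linear[OF D]]
      by (simp add: o_def)
    then show "((\<lambda>s. v (\<gamma> s)) has_vector_derivative ((y - x) \<bullet> grad v (\<gamma> s))) (at s within {0..1})"
      by (simp add: has_vector_derivative_def has_derivative_at_withinI)
  qed simp
  moreover have "(y - x) \<bullet> integral {0..1} (\<lambda>s. grad v (\<gamma> s)) =
                 integral {0..1} (\<lambda>s. (y - x) \<bullet> grad v (\<gamma> s))"
    using integral_linear[OF grad_int bounded_linear_inner_right[of "y - x"]] by (simp add: o_def)
  moreover have "\<gamma> 1 = y" "\<gamma> 0 = x" unfolding \<gamma>_def by simp_all
  ultimately have "(y - x) \<bullet> integral {0..1} (\<lambda>s. grad v (\<gamma> s)) = v y - v x"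
    by (simp add: integral_unique)
  then show ?thesis
    unfolding mag_phase_def \<gamma>_def[symmetric] split inner_add_right by simp
qed

lemma mag_window_add_grad:
  assumes "continuous_on UNIV A" "smooth v"
  shows "mag_window (\<lambda>y. A y + grad v y) x \<xi> = (\<lambda>y. cis (v x) * (cis (- v y) * mag_window A x \<xi> y))"
proof
  fix y
  have "cis (- mag_phase (\<lambda>y. A y + grad v y) y x) = cis (v x) * (cis (- v y) * cis (- mag_phase A y x))"
    unfolding mag_phase_add_grad[OF assms] by (simp add: cis_mult algebra_simps)
  then show "mag_window (\<lambda>y. A y + grad v y) x \<xi> y = cis (v x) * (cis (- v y) * mag_window A x \<xi> y)"
    unfolding mag_window_def by (simp add: mult_ac)
qed

theorem proposition4p3:
  fixes B :: "'n::finite \<Rightarrow> 'n \<Rightarrow> real^'n \<Rightarrow> real"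
    and v :: "real^'n \<Rightarrow> real"
    and p :: ennreal
  assumes "CARD('n) \<ge> 2"
    and "1 \<le> p"
    and "magnetic_field B"
    and "Cinf_pol v"
  shows "\<exists>\<Phi>. bij_betw \<Phi> (Mspace p (\<lambda>y. transversal_gauge B y + grad v y))
                          (Mspace p (transversal_gauge B)) \<and>
             (\<forall>u\<in>Mspace p (\<lambda>y. transversal_gauge B y + grad v y).
              \<forall>w\<in>Mspace p (\<lambda>y. transversal_gauge B y + grad v y). \<forall>a b::complex.
                \<Phi> (\<lambda>\<phi>. a * u \<phi> + b * w \<phi>) = (\<lambda>\<phi>. a * \<Phi> u \<phi> + b * \<Phi> w \<phi>)) \<and>
             (\<forall>u\<in>Mspace p (\<lambda>y. transversal_gauge B y + grad v y).
                Mnorm p (transversal_gauge B) (\<Phi> u) = Mnorm p (\<lambda>y. transversal_gauge B y + grad v y) u)"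
proof -
  define A where "A = transversal_gauge B"
  define A' where "A' = (\<lambda>y. A y + grad v y)"
  have "continuous_on UNIV A"
    using assms(3) unfolding A_def magnetic_field_def smooth_bdd_def
    by (intro continuous_on_transversal_gauge continuous_on_smooth) blast
  moreover have sv: "smooth v" using assms(4) unfolding Cinf_pol_def by simp
  ultimately have W: "\<forall>x \<xi>. mag_window A' x \<xi> = (\<lambda>y. cis (v x) * (cis (- v y) * mag_window A x \<xi> y))"
    unfolding A'_def by (blast intro: mag_window_add_grad)
  have m: "Cinf_pol_complex (\<lambda>y. cis (- v y))"
    using Cinf_pol_complex_cis_scaled[OF assms(4), of "-1"] by simp
  have m': "Cinf_pol_complex (\<lambda>y. cis (v y))"
    using Cinf_pol_complex_cis_scaled[OF assms(4), of 1] by simp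
  have inv: "\<forall>y. cis (v y) * cis (- v y) = 1" by (simp add: cis_mult)
  have cc: "continuous_on UNIV (\<lambda>x. cis (v x))" by (intro continuous_intros continuous_on_smooth sv)
  have c: "\<forall>x. norm (cis (v x)) = 1" by simp
  show ?thesis
    unfolding A_def[symmetric] A'_def[symmetric]
  proof (intro exI[of _ "mult_distr (\<lambda>y. cis (- v y))"] conjI ballI allI)
    show "bij_betw (mult_distr (\<lambda>y. cis (- v y))) (Mspace p A') (Mspace p A)"
      by (rule bij_betw_mult_distr_Mspace[OF m m' inv cc c W])
    show "Mnorm p A (mult_distr (\<lambda>y. cis (- v y)) u) = Mnorm p A' u" if "u \<in> Mspace p A'" for u
      by (rule Mspace_mult_distr(2)[OF m m' inv cc c W that])
  qed (simp add: mult_distr_def)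
qed

end
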